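(* Let $x=(x_1,\dots,x_m)$ and let $y=(y_1,y_2,\dots)$ be a countably infinite alphabet. With $\epsilon_{a,t}$ acting on the $y$-variables, \[\epsilon_{ut^{m-1},t}\bigl(F(u;x,y;t)\bigr)=\prod_{i=1}^m\frac{1-ut^{m-i}}{1-ut^{m-1}x_i}\] and \[\epsilon_{a,t}\bigl(F(1;x,y;t)\bigr)=t^{\binom m2}x_1\cdots x_m\prod_{i=1}^m\frac{1-at^{1-i}}{1-ax_i}.\]
   Context: For $x=(x_1,\dots,x_m)$ and infinite $y$, \[F(u;x,y;t)=\sum_{I\subseteq\{1,\dots,m\}}(-u)^{|I|}t^{\binom{|I|}{2}}\prod_{i\in I,\ j\in\{1,\dots,m\}\setminus I}\frac{tx_i-x_j}{x_i-x_j}\prod_{i\in I}\prod_{j\ge1}\frac{1-x_iy_j}{1-tx_iy_j},\] where $\prod_{j\ge1}\frac{1-zy_j}{1-tzy_j}=\exp\bigl(-\sum_{r\ge1}(1-t^r)z^rp_r(y)/r\bigr)$ is a formal power series in $z$ whose coefficients are symmetric functions of $y$, $p_r(y)=\sum_j y_j^r$ being the power sums. The specialization $\epsilon_{a,t}$ is the ring homomorphism from symmetric functions in $y$ (over the field of rational functions in the parameters) defined by $\epsilon_{a,t}(p_r)=(1-a^r)/(1-t^r)$, applied coefficientwise; the identities are understood as identities of rational functions / their power series expansions. *)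

theory Defs
  imports "HOL-Analysis.Analysis"
begin

text \<open>The specialization epsilon_{a,t} on power sums: p_r |-> (1 - a^r)/(1 - t^r).\<close>
definition eps_p :: "complex \<Rightarrow> complex \<Rightarrow> nat \<Rightarrow> complex" where
  "eps_p a t r = (1 - a ^ r) / (1 - t ^ r)"

text \<open>epsilon_{a,t} applied coefficientwise to
  prod_j (1 - z y_j)/(1 - t z y_j) = exp(- sum_{r>=1} (1 - t^r) z^r p_r(y) / r),
  realised as the (convergent, for |z| < 1 and |a z| < 1) power series in z.\<close>
definition H_spec :: "complex \<Rightarrow> complex \<Rightarrow> complex \<Rightarrow> complex" where
  "H_spec a t z =
     exp (- (\<Sum>k. (1 - t ^ Suc k) * z ^ Suc k * eps_p a t (Suc k) / of_nat (Suc k)))"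

definition F_spec :: "complex \<Rightarrow> complex \<Rightarrow> complex \<Rightarrow> nat \<Rightarrow> (nat \<Rightarrow> complex) \<Rightarrow> complex" where
  "F_spec a t u m x =
     (\<Sum>I\<in>Pow {1..m}.
        (- u) ^ card I * t ^ (card I choose 2)
        * (\<Prod>i\<in>I. \<Prod>j\<in>{1..m} - I. (t * x i - x j) / (x i - x j))
        * (\<Prod>i\<in>I. H_spec a t (x i)))"

end

theory Submission
  imports Defs "Jordan_Normal_Form.Determinant"
begin

(* Under the specialisation the y-factor at x_i becomes (1 - x_i)/(1 - a x_i), the exponential
   of a difference of two logarithm series; write c_i for -u times it. Multiplied by the
   Vandermonde product V(x), the summand of I in F is prod_{i in I} c_i times V evaluated at x
   with the variables in I scaled by t, so by multilinearity in the rows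
   F V(x) = det (x_i^k + c_i (t x_i)^k). For both specialisations row i of this matrix is d_i
   times the power row (x_i^l)_l times one fixed bidiagonal matrix, so F is prod_i d_i times the
   product of the diagonal of that matrix. *)

lemma sums_ln_one_minus:
  fixes w :: complex
  assumes "norm w < 1"
  shows "(\<lambda>k. w ^ Suc k / of_nat (Suc k)) sums - ln (1 - w)"
proof -
  have "(\<lambda>n. - (w ^ n) / of_nat n) sums ln (1 - w)"
    using Ln_series'[of "- w"] assms by simp
  then have "(\<lambda>k. - (w ^ Suc k) / of_nat (Suc k)) sums ln (1 - w)"
    using sums_Suc_iff[of "\<lambda>n. - (w ^ n) / of_nat n"] by simp
  then show ?thesis
    using sums_minus by fastforce
qed

lemma H_spec_closed_form:
  fixes a t z :: complex
  assumes t_generic: "\<And>r. r \<ge> 1 \<Longrightarrow> t ^ r \<noteq> 1"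
    and z: "norm z < 1" and az: "norm (a * z) < 1"
  shows "H_spec a t z = (1 - z) / (1 - a * z)"
proof -
  have "(1 - t ^ Suc k) * z ^ Suc k * eps_p a t (Suc k) / of_nat (Suc k)
      = z ^ Suc k / of_nat (Suc k) - (a * z) ^ Suc k / of_nat (Suc k)" for k
  proof -
    have eps: "(1 - t ^ Suc k) * eps_p a t (Suc k) = 1 - a ^ Suc k"
      using t_generic[of "Suc k"] by (simp add: eps_p_def)
    have "(1 - t ^ Suc k) * z ^ Suc k * eps_p a t (Suc k) / of_nat (Suc k)
        = ((1 - t ^ Suc k) * eps_p a t (Suc k)) * z ^ Suc k / of_nat (Suc k)"
      by (simp add: ac_simps)
    also have "\<dots> = z ^ Suc k / of_nat (Suc k) - (a * z) ^ Suc k / of_nat (Suc k)"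
      unfolding eps by (simp add: power_mult_distrib diff_divide_distrib algebra_simps del: of_nat_Suc)
    finally show ?thesis .
  qed
  moreover have "(\<lambda>k. z ^ Suc k / of_nat (Suc k) - (a * z) ^ Suc k / of_nat (Suc k))
      sums (- ln (1 - z) - - ln (1 - a * z))"
    by (intro sums_diff sums_ln_one_minus z az)
  ultimately have "H_spec a t z = exp (ln (1 - z) - ln (1 - a * z))"
    unfolding H_spec_def by (simp add: sums_unique[symmetric])
  also have "\<dots> = (1 - z) / (1 - a * z)"
  proof -
    have "1 - z \<noteq> 0" "1 - a * z \<noteq> 0"
      using z az by auto
    then show ?thesis
      by (simp add: exp_diff)
  qed
  finally show ?thesis .
qed

lemma sum_mult_two_point:
  fixes f :: "nat \<Rightarrow> 'a::semiring_0"
  assumes "k < n"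
  shows "(\<Sum>l<n. f l * (if l = k then p else if l = j then q else 0))
    = f k * p + (if j < n \<and> j \<noteq> k then f j * q else 0)"
proof (cases "j = k")
  case True
  then show ?thesis
    using assms by (simp add: if_distrib cong: if_cong)
next
  case False
  have "(\<Sum>l<n. f l * (if l = k then p else if l = j then q else 0))
      = (\<Sum>l<n. (if l = k then f k * p else 0) + (if l = j then f j * q else 0))"
    using False by (intro sum.cong) auto
  then show ?thesis
    using assms False by (simp add: sum.distrib)
qed

lemma det_mat_upper_triangular:
  assumes "\<And>i j. j < i \<Longrightarrow> i < n \<Longrightarrow> f (i, j) = 0"
  shows "det (mat n n f) = (\<Prod>k<n. f (k, k))"
proof -
  have "det (mat n n f) = prod_list (diag_mat (mat n n f))"
    by (rule det_upper_triangular) (auto simp: upper_triangular_def assms)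
  then show ?thesis
    by (simp add: prod.list_conv_set_nth diag_mat_def atLeast0LessThan)
qed

lemma det_mat_lower_triangular:
  assumes "\<And>i j. i < j \<Longrightarrow> j < n \<Longrightarrow> f (i, j) = 0"
  shows "det (mat n n f) = (\<Prod>k<n. f (k, k))"
proof -
  have "det (mat n n f) = prod_list (diag_mat (mat n n f))"
    by (rule det_lower_triangular[of n]) (auto simp: assms)
  then show ?thesis
    by (simp add: prod.list_conv_set_nth diag_mat_def atLeast0LessThan)
qed

lemma det_mat_eq_sum_permutes:
  "det (mat n n f) = (\<Sum>p | p permutes {..<n}. signof p * (\<Prod>i<n. f (i, p i)))"
proof -
  have "p i < n" if "p permutes {..<n}" "i < n" for p i
    using permutes_in_image[OF that(1)] that(2) by simp
  then show ?thesis
    unfolding det_def'[OF mat_carrier] atLeast0LessThan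
    by (intro sum.cong refl arg_cong2[where f = "(*)"] prod.cong) auto
qed

lemma det_mat_scale_rows:
  "det (mat n n (\<lambda>(i, k). s i * f i k)) = (\<Prod>i<n. s i) * det (mat n n (\<lambda>(i, k). f i k))"
  by (simp add: det_mat_eq_sum_permutes prod.distrib sum_distrib_left ac_simps)

lemma det_mat_add_rows:
  "det (mat n n (\<lambda>(i, k). f i k + g i k))
    = (\<Sum>J\<in>Pow {..<n}. det (mat n n (\<lambda>(i, k). if i \<in> J then g i k else f i k)))"
proof -
  have "(\<Prod>i<n. f i (p i) + g i (p i))
      = (\<Sum>J\<in>Pow {..<n}. \<Prod>i<n. if i \<in> J then g i (p i) else f i (p i))" for p
  proof -
    have "(\<Prod>i<n. g i (p i) + f i (p i))
        = (\<Sum>J\<in>Pow {..<n}. (\<Prod>i\<in>J. g i (p i)) * (\<Prod>i\<in>{..<n} - J. f i (p i)))"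
      by (rule prod_add) simp
    also have "\<dots> = (\<Sum>J\<in>Pow {..<n}. \<Prod>i<n. if i \<in> J then g i (p i) else f i (p i))"
    proof (intro sum.cong refl)
      fix J assume "J \<in> Pow {..<n}"
      then have "{..<n} \<inter> {i. i \<in> J} = J" "{..<n} \<inter> - {i. i \<in> J} = {..<n} - J"
        by auto
      then show "(\<Prod>i\<in>J. g i (p i)) * (\<Prod>i\<in>{..<n} - J. f i (p i))
          = (\<Prod>i<n. if i \<in> J then g i (p i) else f i (p i))"
        by (simp add: prod.If_cases)
    qed
    finally show ?thesis
      by (simp add: add.commute)
  qed
  then show ?thesis
    unfolding det_mat_eq_sum_permutes
    by (simp add: sum_distrib_left sum.swap[of _ "Pow {..<n}"])
qed

lemma index_power_mat_mult:
  assumes "C \<in> carrier_mat n n'" "i < n" "k < n'"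
  shows "(mat n n (\<lambda>(i, k). z i ^ k) * C) $$ (i, k) = (\<Sum>l<n. z i ^ l * C $$ (l, k))"
  using assms by (simp add: scalar_prod_def atLeast0LessThan)

definition vandermonde :: "nat \<Rightarrow> (nat \<Rightarrow> 'a::comm_ring_1) \<Rightarrow> 'a" where
  "vandermonde n y = (\<Prod>i<n. \<Prod>j<i. y i - y j)"

lemma vandermonde_nonzero:
  fixes y :: "nat \<Rightarrow> 'a::idom"
  assumes "inj_on y {..<n}"
  shows "vandermonde n y \<noteq> 0"
proof -
  have "y i - y j \<noteq> 0" if "j < i" "i < n" for i j
    using inj_onD[OF assms, of i j] that by auto
  then show ?thesis
    unfolding vandermonde_def by simp
qed

lemma det_vandermonde_mat:
  fixes y :: "nat \<Rightarrow> 'a::comm_ring_1"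
  shows "det (mat n n (\<lambda>(i, k). y i ^ k)) = vandermonde n y"
proof (induction n)
  case 0
  then show ?case
    by (simp add: vandermonde_def)
next
  case (Suc n)
  let ?M = "mat (Suc n) (Suc n) (\<lambda>(i, k). y i ^ k)"
  define B :: "'a mat" where
    "B = mat (Suc n) (Suc n) (\<lambda>(l, k). if l = k then 1 else if l = k - 1 then - y n else 0)"
  define N :: "'a mat" where
    "N = mat (Suc n) (Suc n) (\<lambda>(i, k). if k = 0 then 1 else (y i - y n) * y i ^ (k - 1))"
  have B: "B \<in> carrier_mat (Suc n) (Suc n)"
    by (simp add: B_def)
  have det_B: "det B = 1"
    unfolding B_def by (subst det_mat_upper_triangular) auto
  \<comment> \<open>subtracting \<open>y n\<close> times each column from the next one clears the last row\<close>
  have MB: "?M * B = N"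
  proof (rule eq_matI)
    fix i k assume "i < dim_row N" "k < dim_col N"
    then have "i < Suc n" "k < Suc n"
      by (auto simp: N_def)
    have "(?M * B) $$ (i, k) = (\<Sum>l<Suc n. y i ^ l * B $$ (l, k))"
      using B \<open>i < Suc n\<close> \<open>k < Suc n\<close> by (rule index_power_mat_mult)
    also have "\<dots> = (\<Sum>l<Suc n. y i ^ l * (if l = k then 1 else if l = k - 1 then - y n else 0))"
      using \<open>k < Suc n\<close> by (intro sum.cong) (auto simp: B_def)
    finally show "(?M * B) $$ (i, k) = N $$ (i, k)"
      using \<open>i < Suc n\<close> \<open>k < Suc n\<close>
      by (cases k) (auto simp: N_def sum_mult_two_point algebra_simps)
  qed (auto simp: B_def N_def)
  then have "det ?M = det N"
    by (metis det_mult[OF mat_carrier B] det_B mult_1_right)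
  also have "det N = (\<Sum>j<Suc n. N $$ (n, j) * cofactor N n j)"
    by (rule laplace_expansion_row) (simp_all add: N_def)
  also have "\<dots> = N $$ (n, 0) * cofactor N n 0"
    by (subst sum.remove[of _ 0]) (auto simp: N_def intro!: sum.neutral)
  also have "\<dots> = (-1) ^ n * det (mat_delete N n 0)"
    by (simp add: N_def cofactor_def)
  also have "mat_delete N n 0 = mat n n (\<lambda>(i, k). (y i - y n) * y i ^ k)"
    by (rule eq_matI) (auto simp: mat_delete_def N_def)
  also have "det \<dots> = (\<Prod>i<n. y i - y n) * vandermonde n y"
    by (simp add: det_mat_scale_rows Suc.IH)
  also have "(-1) ^ n * \<dots> = (\<Prod>i<n. y n - y i) * vandermonde n y"
  proof -
    have "(\<Prod>i<n. y n - y i) = (\<Prod>i<n. (-1) * (y i - y n))"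
      by simp
    then show ?thesis
      by (simp only: prod.distrib prod_constant card_lessThan mult.assoc)
  qed
  finally show ?case
    by (simp add: vandermonde_def mult.commute)
qed

lemma prod_pairs_within_eq_power:
  fixes n :: nat and J :: "nat set"
  shows "(\<Prod>i<n. \<Prod>j<i. if i \<in> J \<and> j \<in> J then t else 1)
    = (t::'a::comm_monoid_mult) ^ (card (J \<inter> {..<n}) choose 2)"
proof (induction n)
  case 0
  then show ?case
    by (simp add: numeral_2_eq_2)
next
  case (Suc n)
  show ?case
  proof (cases "n \<in> J")
    case True
    have "(\<Prod>j<n. if n \<in> J \<and> j \<in> J then t else 1) = t ^ card (J \<inter> {..<n})"
      using True by (simp add: prod.inter_restrict[symmetric] Int_commute)
    moreover have "J \<inter> {..<Suc n} = insert n (J \<inter> {..<n})"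
      using True by auto
    ultimately show ?thesis
      using Suc.IH by (simp add: power_add[symmetric] numeral_2_eq_2 add.commute)
  next
    case False
    then have "J \<inter> {..<Suc n} = J \<inter> {..<n}"
      by (auto simp: less_Suc_eq)
    then show ?thesis
      using False Suc.IH by simp
  qed
qed

lemma prod_triangles_eq_prod_square:
  fixes R :: "nat \<Rightarrow> nat \<Rightarrow> 'a::comm_monoid_mult"
  assumes "\<And>i. R i i = 1"
  shows "(\<Prod>i<n. \<Prod>j<i. R i j) * (\<Prod>i<n. \<Prod>j<i. R j i) = (\<Prod>i<n. \<Prod>j<n. R i j)"
proof (induction n)
  case 0
  then show ?case
    by simp
next
  case (Suc n)
  have "(\<Prod>i<Suc n. \<Prod>j<Suc n. R i j)
      = (\<Prod>i<n. (\<Prod>j<n. R i j) * R i n) * ((\<Prod>j<n. R n j) * R n n)"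
    by simp
  also have "\<dots> = (\<Prod>i<n. \<Prod>j<n. R i j) * (\<Prod>i<n. R i n) * (\<Prod>j<n. R n j)"
    by (simp add: prod.distrib assms)
  finally show ?case
    using Suc.IH[symmetric] by (simp add: prod.distrib ac_simps)
qed

definition shift_coeff :: "'a::field \<Rightarrow> 'i set \<Rightarrow> ('i \<Rightarrow> 'a) \<Rightarrow> 'i set \<Rightarrow> 'a" where
  "shift_coeff t S z J = (\<Prod>i\<in>J. \<Prod>j\<in>S - J. (t * z i - z j) / (z i - z j))"

definition shift_sum :: "'a::field \<Rightarrow> 'i set \<Rightarrow> ('i \<Rightarrow> 'a) \<Rightarrow> ('i \<Rightarrow> 'a) \<Rightarrow> 'a" where
  "shift_sum t S z c = (\<Sum>J\<in>Pow S. (\<Prod>i\<in>J. c i) * t ^ (card J choose 2) * shift_coeff t S z J)"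

lemma vandermonde_scale_subset:
  fixes z :: "nat \<Rightarrow> 'a::field"
  assumes J: "J \<subseteq> {..<n}" and inj: "inj_on z {..<n}"
  shows "vandermonde n (\<lambda>i. if i \<in> J then t * z i else z i)
    = t ^ (card J choose 2) * shift_coeff t {..<n} z J * vandermonde n z"
proof -
  define T where "T i j = (if i \<in> J \<and> j \<in> J then t else 1)" for i j
  define R where "R i j = (if i \<in> J \<and> j \<notin> J then (t * z i - z j) / (z i - z j) else 1)" for i j
  let ?y = "\<lambda>i. if i \<in> J then t * z i else z i"
  have "?y i - ?y j = (z i - z j) * T i j * (R i j * R j i)" if "j < i" "i < n" for i j
  proof -
    have "z i - z j \<noteq> 0" "z j - z i \<noteq> 0"
      using inj_onD[OF inj, of i j] that by auto
    then show ?thesis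
      unfolding T_def R_def by (auto simp: field_simps)
  qed
  then have "vandermonde n ?y
      = vandermonde n z * (\<Prod>i<n. \<Prod>j<i. T i j) * ((\<Prod>i<n. \<Prod>j<i. R i j) * (\<Prod>i<n. \<Prod>j<i. R j i))"
    unfolding vandermonde_def by (simp add: prod.distrib)
  also have "(\<Prod>i<n. \<Prod>j<i. T i j) = t ^ (card J choose 2)"
    using prod_pairs_within_eq_power[where n = n and J = J and t = t] J by (simp add: T_def Int_absorb2)
  also have "(\<Prod>i<n. \<Prod>j<i. R i j) * (\<Prod>i<n. \<Prod>j<i. R j i) = (\<Prod>i<n. \<Prod>j<n. R i j)"
    by (rule prod_triangles_eq_prod_square) (simp add: R_def)
  also have "\<dots> = shift_coeff t {..<n} z J"
  proof -
    have "(\<Prod>j<n. R i j) = (if i \<in> J then (\<Prod>j\<in>{..<n} - J. (t * z i - z j) / (z i - z j)) else 1)"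
      for i
      by (simp add: R_def prod.inter_filter[symmetric] set_diff_eq)
    then show ?thesis
      using J by (simp add: shift_coeff_def prod.inter_restrict[symmetric] Int_absorb1 Int_absorb2)
  qed
  finally show ?thesis
    by (simp add: ac_simps)
qed

lemma vandermonde_mult_shift_sum:
  fixes z c :: "nat \<Rightarrow> 'a::field"
  assumes inj: "inj_on z {..<n}"
  shows "vandermonde n z * shift_sum t {..<n} z c
    = det (mat n n (\<lambda>(i, k). z i ^ k + c i * (t * z i) ^ k))"
proof -
  have "vandermonde n z * ((\<Prod>i\<in>J. c i) * t ^ (card J choose 2) * shift_coeff t {..<n} z J)
      = det (mat n n (\<lambda>(i, k). if i \<in> J then c i * (t * z i) ^ k else z i ^ k))"
    if J: "J \<subseteq> {..<n}" for J
  proof -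
    have "det (mat n n (\<lambda>(i, k). if i \<in> J then c i * (t * z i) ^ k else z i ^ k))
        = det (mat n n (\<lambda>(i, k). (if i \<in> J then c i else 1) * (if i \<in> J then t * z i else z i) ^ k))"
      by (rule arg_cong[where f = "\<lambda>f. det (mat n n f)"]) auto
    also have "\<dots> = (\<Prod>i<n. if i \<in> J then c i else 1) * vandermonde n (\<lambda>i. if i \<in> J then t * z i else z i)"
      by (simp only: det_mat_scale_rows det_vandermonde_mat)
    also have "(\<Prod>i<n. if i \<in> J then c i else 1) = (\<Prod>i\<in>J. c i)"
      using J by (simp add: prod.inter_restrict[symmetric] Int_absorb1 Int_absorb2)
    finally show ?thesis
      using J inj by (simp add: vandermonde_scale_subset ac_simps)
  qed
  then show ?thesis
    unfolding shift_sum_def sum_distrib_left det_mat_add_rows by (intro sum.cong refl) auto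
qed

lemma shift_sum_eq_prod_det:
  fixes z c d :: "nat \<Rightarrow> 'a::field"
  assumes inj: "inj_on z {..<n}" and C: "C \<in> carrier_mat n n"
    and rows: "\<And>i k. i < n \<Longrightarrow> k < n \<Longrightarrow>
      d i * (\<Sum>l<n. z i ^ l * C $$ (l, k)) = z i ^ k + c i * (t * z i) ^ k"
  shows "shift_sum t {..<n} z c = (\<Prod>i<n. d i) * det C"
proof -
  let ?X = "mat n n (\<lambda>(i, k). z i ^ k)"
  have "mat n n (\<lambda>(i, k). z i ^ k + c i * (t * z i) ^ k) = mat n n (\<lambda>(i, k). d i * (?X * C) $$ (i, k))"
    using C by (intro eq_matI) (simp_all add: rows index_power_mat_mult del: index_mult_mat)
  moreover have "mat n n (\<lambda>(i, k). (?X * C) $$ (i, k)) = ?X * C"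
    using C by (intro eq_matI) auto
  ultimately have "vandermonde n z * shift_sum t {..<n} z c = vandermonde n z * ((\<Prod>i<n. d i) * det C)"
    using C by (simp add: vandermonde_mult_shift_sum[OF inj] det_mat_scale_rows det_mult[OF mat_carrier]
        det_vandermonde_mat ac_simps)
  then show ?thesis
    using vandermonde_nonzero[OF inj] by simp
qed

lemma shift_sum_prod_u:
  fixes z :: "nat \<Rightarrow> 'a::field" and u t :: 'a
  assumes inj: "inj_on z {..<n}"
    and nz: "\<And>i. i < n \<Longrightarrow> 1 - u * t ^ (n - 1) * z i \<noteq> 0"
  shows "shift_sum t {..<n} z (\<lambda>i. - u * ((1 - z i) / (1 - u * t ^ (n - 1) * z i)))
    = (\<Prod>k<n. 1 - u * t ^ k) / (\<Prod>i<n. 1 - u * t ^ (n - 1) * z i)"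
proof -
  define b where "b = u * t ^ (n - 1)"
  define C :: "'a mat" where
    "C = mat n n (\<lambda>(l, k). if l = k then 1 - u * t ^ k else if l = Suc k then u * t ^ k - b else 0)"
  have C_carrier: "C \<in> carrier_mat n n"
    by (simp add: C_def)
  have "det C = (\<Prod>k<n. 1 - u * t ^ k)"
    unfolding C_def by (subst det_mat_lower_triangular) auto
  moreover have "1 / (1 - b * z i) * (\<Sum>l<n. z i ^ l * C $$ (l, k))
      = z i ^ k + - u * ((1 - z i) / (1 - b * z i)) * (t * z i) ^ k"
    if i: "i < n" and k: "k < n" for i k
  proof -
    have "(\<Sum>l<n. z i ^ l * C $$ (l, k))
        = (\<Sum>l<n. z i ^ l * (if l = k then 1 - u * t ^ k else if l = Suc k then u * t ^ k - b else 0))"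
      using k by (intro sum.cong) (auto simp: C_def)
    also have "\<dots> = z i ^ k * (1 - u * t ^ k) + (if Suc k < n then z i ^ Suc k * (u * t ^ k - b) else 0)"
      using k by (simp add: sum_mult_two_point)
    \<comment> \<open>for \<open>k = n - 1\<close> the subdiagonal entry outside the matrix would be \<open>0\<close> by the choice of \<open>b\<close>\<close>
    also have "\<dots> = z i ^ k * (1 - u * t ^ k) + z i ^ Suc k * (u * t ^ k - b)"
    proof (cases "Suc k < n")
      case False
      then have "n - 1 = k"
        using k by simp
      then show ?thesis
        using False by (simp add: b_def)
    qed simp
    finally have S: "(\<Sum>l<n. z i ^ l * C $$ (l, k))
        = z i ^ k * (1 - u * t ^ k) + z i ^ Suc k * (u * t ^ k - b)" .
    show ?thesis
      unfolding S b_def using nz[OF i] by (simp add: field_simps power_mult_distrib)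
  qed
  ultimately show ?thesis
    using shift_sum_eq_prod_det[OF inj C_carrier, of "\<lambda>i. 1 / (1 - b * z i)"] b_def
    by (simp add: prod_dividef)
qed

lemma shift_sum_prod_a:
  fixes z :: "nat \<Rightarrow> 'a::field" and a t :: 'a
  assumes inj: "inj_on z {..<n}" and nz: "\<And>i. i < n \<Longrightarrow> 1 - a * z i \<noteq> 0"
  shows "shift_sum t {..<n} z (\<lambda>i. - ((1 - z i) / (1 - a * z i)))
    = (\<Prod>i<n. z i) * (\<Prod>k<n. t ^ k - a) / (\<Prod>i<n. 1 - a * z i)"
proof -
  define C :: "'a mat" where
    "C = mat n n (\<lambda>(l, k). if l = k then t ^ k - a else if l = k - 1 then 1 - t ^ k else 0)"
  have C_carrier: "C \<in> carrier_mat n n"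
    by (simp add: C_def)
  have "det C = (\<Prod>k<n. t ^ k - a)"
    unfolding C_def by (subst det_mat_upper_triangular) auto
  moreover have "z i / (1 - a * z i) * (\<Sum>l<n. z i ^ l * C $$ (l, k))
      = z i ^ k + - ((1 - z i) / (1 - a * z i)) * (t * z i) ^ k"
    if i: "i < n" and k: "k < n" for i k
  proof -
    have "(\<Sum>l<n. z i ^ l * C $$ (l, k))
        = (\<Sum>l<n. z i ^ l * (if l = k then t ^ k - a else if l = k - 1 then 1 - t ^ k else 0))"
      using k by (intro sum.cong) (auto simp: C_def)
    also have "\<dots> = z i ^ k * (t ^ k - a) + (if k = 0 then 0 else z i ^ (k - 1) * (1 - t ^ k))"
      using k by (cases k) (simp_all add: sum_mult_two_point)
    finally have S: "(\<Sum>l<n. z i ^ l * C $$ (l, k))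
        = z i ^ k * (t ^ k - a) + (if k = 0 then 0 else z i ^ (k - 1) * (1 - t ^ k))" .
    have "z i * (\<Sum>l<n. z i ^ l * C $$ (l, k)) = z i ^ Suc k * (t ^ k - a) + z i ^ k * (1 - t ^ k)"
      unfolding S by (cases k) (simp_all add: algebra_simps)
    then have "z i / (1 - a * z i) * (\<Sum>l<n. z i ^ l * C $$ (l, k))
        = (z i ^ Suc k * (t ^ k - a) + z i ^ k * (1 - t ^ k)) / (1 - a * z i)"
      by (simp flip: \<open>z i * (\<Sum>l<n. z i ^ l * C $$ (l, k)) = _\<close>)
    then show ?thesis
      using nz[OF i] by (simp add: field_simps power_mult_distrib)
  qed
  ultimately show ?thesis
    using shift_sum_eq_prod_det[OF inj C_carrier, of "\<lambda>i. z i / (1 - a * z i)"]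
    by (simp add: prod_dividef)
qed

lemma shift_sum_cong:
  assumes "\<And>i. i \<in> S \<Longrightarrow> c i = c' i"
  shows "shift_sum t S z c = shift_sum t S z c'"
proof -
  have "(\<Prod>i\<in>J. c i) = (\<Prod>i\<in>J. c' i)" if "J \<subseteq> S" for J
    using assms that by (intro prod.cong) auto
  then show ?thesis
    unfolding shift_sum_def by (intro sum.cong refl) auto
qed

lemma shift_sum_reindex:
  assumes "inj_on f S"
  shows "shift_sum t (f ` S) z c = shift_sum t S (z \<circ> f) (c \<circ> f)"
proof -
  have "(\<Prod>i\<in>f ` J. c i) * t ^ (card (f ` J) choose 2) * shift_coeff t (f ` S) z (f ` J)
      = (\<Prod>i\<in>J. (c \<circ> f) i) * t ^ (card J choose 2) * shift_coeff t S (z \<circ> f) J"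
    if "J \<subseteq> S" for J
  proof -
    have "inj_on f J" "inj_on f (S - J)"
      using assms that by (auto intro: inj_on_subset)
    moreover have "f ` S - f ` J = f ` (S - J)"
      using assms that by (simp add: inj_on_image_set_diff)
    ultimately show ?thesis
      by (simp add: shift_coeff_def prod.reindex card_image)
  qed
  then show ?thesis
    unfolding shift_sum_def image_Pow_surj[OF refl, symmetric]
    by (simp add: sum.reindex[OF inj_on_image_Pow[OF assms]])
qed

lemma F_spec_eq_shift_sum:
  "F_spec a t u m x = shift_sum t {1..m} x (\<lambda>i. - u * H_spec a t (x i))"
proof -
  have "(\<Prod>i\<in>I. - (u * H_spec a t (x i))) = (- u) ^ card I * (\<Prod>i\<in>I. H_spec a t (x i))" for I
    using prod.distrib[of "\<lambda>_. - u" "\<lambda>i. H_spec a t (x i)" I] by simp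
  then show ?thesis
    unfolding F_spec_def shift_sum_def shift_coeff_def by (simp add: ac_simps)
qed

lemma prod_pow_sub_eq_powi:
  fixes t a :: "'a::field"
  assumes "t \<noteq> 0"
  shows "(\<Prod>k<m. t ^ k - a) = t ^ (m choose 2) * (\<Prod>i=1..m. 1 - a * t powi (1 - int i))"
proof (induction m)
  case 0
  then show ?case
    by (simp add: numeral_2_eq_2)
next
  case (Suc m)
  have "t ^ m * (1 - a * t powi (1 - int (Suc m))) = t ^ m - a"
    using assms by (simp add: power_int_minus field_simps)
  then show ?case
    using Suc.IH by (simp add: numeral_2_eq_2 power_add ac_simps)
qed

lemma F_spec_eq_shift_sum_ratio:
  fixes x :: "nat \<Rightarrow> complex" and b t v :: complex
  assumes t_generic: "\<And>r. r \<ge> 1 \<Longrightarrow> t ^ r \<noteq> 1"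
    and x_small: "\<And>i. i \<in> {1..m} \<Longrightarrow> norm (x i) < 1"
    and bx_small: "\<And>i. i \<in> {1..m} \<Longrightarrow> norm (b * x i) < 1"
  shows "F_spec b t v m x
    = shift_sum t {..<m} (\<lambda>i. x (Suc i)) (\<lambda>i. - v * ((1 - x (Suc i)) / (1 - b * x (Suc i))))"
proof -
  have "F_spec b t v m x = shift_sum t (Suc ` {..<m}) x (\<lambda>i. - v * H_spec b t (x i))"
    unfolding image_Suc_lessThan by (rule F_spec_eq_shift_sum)
  also have "\<dots> = shift_sum t {..<m} (\<lambda>i. x (Suc i)) (\<lambda>i. - v * H_spec b t (x (Suc i)))"
    using shift_sum_reindex[of Suc "{..<m}"] by (simp add: comp_def)
  also have "\<dots> = shift_sum t {..<m} (\<lambda>i. x (Suc i)) (\<lambda>i. - v * ((1 - x (Suc i)) / (1 - b * x (Suc i))))"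
    by (rule shift_sum_cong) (simp add: H_spec_closed_form t_generic x_small bx_small)
  finally show ?thesis .
qed

theorem lemma3p2:
  fixes m :: nat and x :: "nat \<Rightarrow> complex" and u t a :: complex
  assumes distinct: "inj_on x {1..m}"
    and t_nz: "t \<noteq> 0"
    and t_generic: "\<And>r. r \<ge> 1 \<Longrightarrow> t ^ r \<noteq> 1"
    and x_small: "\<And>i. i \<in> {1..m} \<Longrightarrow> norm (x i) < 1"
    and ux_small: "\<And>i. i \<in> {1..m} \<Longrightarrow> norm (u * t ^ (m - 1) * x i) < 1"
    and ax_small: "\<And>i. i \<in> {1..m} \<Longrightarrow> norm (a * x i) < 1"
  shows "F_spec (u * t ^ (m - 1)) t u m x
           = (\<Prod>i=1..m. (1 - u * t ^ (m - i)) / (1 - u * t ^ (m - 1) * x i))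
         \<and> F_spec a t 1 m x
           = t ^ (m choose 2) * (\<Prod>i=1..m. x i)
             * (\<Prod>i=1..m. (1 - a * t powi (1 - int i)) / (1 - a * x i))"
proof -
  have inj: "inj_on (\<lambda>i. x (Suc i)) {..<m}"
  proof (rule inj_onI)
    fix i j assume "i \<in> {..<m}" "j \<in> {..<m}" "x (Suc i) = x (Suc j)"
    then show "i = j"
      using inj_onD[OF distinct \<open>x (Suc i) = x (Suc j)\<close>] by simp
  qed
  have nz_u: "1 - u * t ^ (m - 1) * x (Suc i) \<noteq> 0" and nz_a: "1 - a * x (Suc i) \<noteq> 0"
    if "i < m" for i
    using ux_small[of "Suc i"] ax_small[of "Suc i"] that by auto
  have "F_spec (u * t ^ (m - 1)) t u m x = shift_sum t {..<m} (\<lambda>i. x (Suc i))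
      (\<lambda>i. - u * ((1 - x (Suc i)) / (1 - u * t ^ (m - 1) * x (Suc i))))"
    by (rule F_spec_eq_shift_sum_ratio[OF t_generic x_small ux_small])
  also have "\<dots> = (\<Prod>k<m. 1 - u * t ^ k) / (\<Prod>i<m. 1 - u * t ^ (m - 1) * x (Suc i))"
    by (rule shift_sum_prod_u[OF inj nz_u])
  also have "(\<Prod>k<m. 1 - u * t ^ k) = (\<Prod>i<m. 1 - u * t ^ (m - Suc i))"
    by (rule prod.nat_diff_reindex[symmetric])
  finally have u_case: "F_spec (u * t ^ (m - 1)) t u m x
      = (\<Prod>i<m. 1 - u * t ^ (m - Suc i)) / (\<Prod>i<m. 1 - u * t ^ (m - 1) * x (Suc i))" .
  have "F_spec a t 1 m x = shift_sum t {..<m} (\<lambda>i. x (Suc i))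
      (\<lambda>i. - 1 * ((1 - x (Suc i)) / (1 - a * x (Suc i))))"
    by (rule F_spec_eq_shift_sum_ratio[OF t_generic x_small ax_small])
  also have "\<dots> = (\<Prod>i<m. x (Suc i)) * (\<Prod>k<m. t ^ k - a) / (\<Prod>i<m. 1 - a * x (Suc i))"
    unfolding mult_minus1 by (rule shift_sum_prod_a[OF inj nz_a])
  finally show ?thesis
    using u_case by (simp add: prod_pow_sub_eq_powi[OF t_nz] prod.atLeast1_atMost_eq prod_dividef)
qed

end
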